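(* Let $X$ be a nonempty set and let $\mathcal{S}_1,\mathcal{S}_2\subseteq\mathcal{P}(X)$ with $\emptyset\in\mathcal{S}_1$ and $\emptyset\in\mathcal{S}_2$. Define $\mathcal{S}_1\cup^{\star}\mathcal{S}_2=\{S_1\cup S_2 : S_1\in\mathcal{S}_1,\ S_2\in\mathcal{S}_2\}$. Then $\triangleleft_{\mathcal{S}_1\cup^{\star}\mathcal{S}_2}=\triangleleft_{\mathcal{S}_1}\cup\triangleleft_{\mathcal{S}_2}$ (as subsets of $X\times X$).
   Context: For $\mathcal{S}\subseteq\mathcal{P}(X)$, $\triangleleft_{\mathcal{S}}$ is the relation $\{(x,y)\in X\times X : \exists S\in\mathcal{S},\ x\in S,\ y\notin S\}$. *)

theory Defs
  imports Main
begin

definition sep_rel :: "'a set \<Rightarrow> 'a set set \<Rightarrow> ('a \<times> 'a) set" where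
  "sep_rel X \<S> = {(x, y) \<in> X \<times> X. \<exists>S\<in>\<S>. x \<in> S \<and> y \<notin> S}"

definition star_union :: "'a set set \<Rightarrow> 'a set set \<Rightarrow> 'a set set" where
  "star_union \<S>1 \<S>2 = {S1 \<union> S2 | S1 S2. S1 \<in> \<S>1 \<and> S2 \<in> \<S>2}"

end

theory Submission
  imports Defs
begin

text \<open>A union \<open>S1 \<union> S2\<close> separates \<open>x\<close> from \<open>y\<close> only if one of its two parts does;
  conversely, padding with the empty set embeds each family into the star union.\<close>

lemma sep_rel_mono: "\<S> \<subseteq> \<T> \<Longrightarrow> sep_rel X \<S> \<subseteq> sep_rel X \<T>"
  unfolding sep_rel_def by blast

lemma sep_rel_Un: "sep_rel X (\<S> \<union> \<T>) = sep_rel X \<S> \<union> sep_rel X \<T>"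
  unfolding sep_rel_def by blast

lemma sep_rel_star_union_subset:
  "sep_rel X (star_union \<S>1 \<S>2) \<subseteq> sep_rel X \<S>1 \<union> sep_rel X \<S>2"
  unfolding sep_rel_def star_union_def by blast

lemma subset_star_union_left: "{} \<in> \<S>2 \<Longrightarrow> \<S>1 \<subseteq> star_union \<S>1 \<S>2"
  unfolding star_union_def by blast

lemma subset_star_union_right: "{} \<in> \<S>1 \<Longrightarrow> \<S>2 \<subseteq> star_union \<S>1 \<S>2"
  unfolding star_union_def by (auto intro: exI[of _ "{}"])

theorem proposition2p3:
  fixes X :: "'a set" and \<S>1 \<S>2 :: "'a set set"
  assumes "X \<noteq> {}"
    and "\<S>1 \<subseteq> Pow X" and "\<S>2 \<subseteq> Pow X"
    and "{} \<in> \<S>1" and "{} \<in> \<S>2"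
  shows "sep_rel X (star_union \<S>1 \<S>2) = sep_rel X \<S>1 \<union> sep_rel X \<S>2"
proof
  show "sep_rel X (star_union \<S>1 \<S>2) \<subseteq> sep_rel X \<S>1 \<union> sep_rel X \<S>2"
    by (rule sep_rel_star_union_subset)
  have "\<S>1 \<union> \<S>2 \<subseteq> star_union \<S>1 \<S>2"
    using subset_star_union_left[OF \<open>{} \<in> \<S>2\<close>] subset_star_union_right[OF \<open>{} \<in> \<S>1\<close>]
    by blast
  then show "sep_rel X \<S>1 \<union> sep_rel X \<S>2 \<subseteq> sep_rel X (star_union \<S>1 \<S>2)"
    unfolding sep_rel_Un[symmetric] by (rule sep_rel_mono)
qed

end
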